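(* Let $V$ be a finite set and let $A$ be a real symmetric matrix indexed by $V$ that has a perfect elimination ordering, and let $v\in V$. Then $v$ is simplicial in $A$ if and only if there exists a perfect elimination ordering of $A$ having $v$ as its first element.
   Context: A perfect elimination ordering of $A$ is a linear order $\pi$ of $V$ with $A_{yz}\ge\min\{A_{xy},A_{xz}\}$ for all $x,y,z\in V$ with $x<_\pi y<_\pi z$. An element $v$ is simplicial in $A$ if $A_{yz}\ge\min\{A_{vy},A_{vz}\}$ for all distinct $y,z\in V\setminus\{v\}$. *)

theory Defs
  imports Complex_Main
begin

definition sym_matrix_on :: "'a set \<Rightarrow> ('a \<Rightarrow> 'a \<Rightarrow> real) \<Rightarrow> bool" where
  "sym_matrix_on V A \<longleftrightarrow> (\<forall>x\<in>V. \<forall>y\<in>V. A x y = A y x)"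

definition linear_order_of :: "'a set \<Rightarrow> 'a list \<Rightarrow> bool" where
  "linear_order_of V \<pi> \<longleftrightarrow> distinct \<pi> \<and> set \<pi> = V"

definition perfect_elimination_ordering :: "'a set \<Rightarrow> ('a \<Rightarrow> 'a \<Rightarrow> real) \<Rightarrow> 'a list \<Rightarrow> bool" where
  "perfect_elimination_ordering V A \<pi> \<longleftrightarrow> linear_order_of V \<pi> \<and>
     (\<forall>i j k. i < j \<and> j < k \<and> k < length \<pi> \<longrightarrow>
        A (\<pi> ! j) (\<pi> ! k) \<ge> min (A (\<pi> ! i) (\<pi> ! j)) (A (\<pi> ! i) (\<pi> ! k)))"

definition simplicial :: "'a set \<Rightarrow> ('a \<Rightarrow> 'a \<Rightarrow> real) \<Rightarrow> 'a \<Rightarrow> bool" where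
  "simplicial V A v \<longleftrightarrow> (\<forall>y\<in>V - {v}. \<forall>z\<in>V - {v}. y \<noteq> z \<longrightarrow> A y z \<ge> min (A v y) (A v z))"

end

theory Submission
  imports Defs
begin

text \<open>Splitting off the first vertex of an ordering shows that the elimination condition is
  equivalent to: every vertex dominates the later ones in the sense that
  \<open>min (A x y) (A x z) \<le> A y z\<close> for all later \<open>y\<close> before \<open>z\<close>. Both dominance and the
  elimination condition survive deleting vertices, so a simplicial vertex can be moved to
  the front of any perfect elimination ordering; conversely, the first vertex of such an
  ordering dominates all pairs of other vertices in one order, hence by symmetry of \<open>A\<close> in
  both, which is simpliciality.\<close>

definition elimination_ordered :: "('a \<Rightarrow> 'a \<Rightarrow> real) \<Rightarrow> 'a list \<Rightarrow> bool" where
  "elimination_ordered A \<pi> \<longleftrightarrow>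
     (\<forall>i j k. i < j \<and> j < k \<and> k < length \<pi> \<longrightarrow>
        A (\<pi> ! j) (\<pi> ! k) \<ge> min (A (\<pi> ! i) (\<pi> ! j)) (A (\<pi> ! i) (\<pi> ! k)))"

lemma perfect_elimination_ordering_iff:
  "perfect_elimination_ordering V A \<pi> \<longleftrightarrow> linear_order_of V \<pi> \<and> elimination_ordered A \<pi>"
  by (simp add: perfect_elimination_ordering_def elimination_ordered_def)

lemma elimination_ordered_Nil [simp]: "elimination_ordered A []"
  by (simp add: elimination_ordered_def)

lemma elimination_ordered_Cons [simp]:
  "elimination_ordered A (x # xs) \<longleftrightarrow>
     sorted_wrt (\<lambda>y z. min (A x y) (A x z) \<le> A y z) xs \<and> elimination_ordered A xs"
  (is "?L \<longleftrightarrow> ?head \<and> ?tail")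
proof
  assume ?L
  then have L: "min (A ((x # xs) ! i) ((x # xs) ! j)) (A ((x # xs) ! i) ((x # xs) ! k))
                  \<le> A ((x # xs) ! j) ((x # xs) ! k)"
    if "i < j" "j < k" "k < Suc (length xs)" for i j k
    using that unfolding elimination_ordered_def by auto
  have ?head
    unfolding sorted_wrt_iff_nth_less using L[of 0 "Suc _" "Suc _"] by auto
  moreover have ?tail
    unfolding elimination_ordered_def using L[of "Suc _" "Suc _" "Suc _"] by auto
  ultimately show "?head \<and> ?tail" ..
next
  assume R: "?head \<and> ?tail"
  have head: "min (A x (xs ! j)) (A x (xs ! k)) \<le> A (xs ! j) (xs ! k)"
    if "j < k" "k < length xs" for j k
    using R that unfolding sorted_wrt_iff_nth_less by auto
  have tail: "min (A (xs ! i) (xs ! j)) (A (xs ! i) (xs ! k)) \<le> A (xs ! j) (xs ! k)"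
    if "i < j" "j < k" "k < length xs" for i j k
    using R that unfolding elimination_ordered_def by auto
  show ?L
    unfolding elimination_ordered_def
  proof (intro allI impI)
    fix i j k assume ijk: "i < j \<and> j < k \<and> k < length (x # xs)"
    then obtain j' k' where "j = Suc j'" "k = Suc k'"
      by (cases j; cases k) auto
    show "min (A ((x # xs) ! i) ((x # xs) ! j)) (A ((x # xs) ! i) ((x # xs) ! k))
            \<le> A ((x # xs) ! j) ((x # xs) ! k)"
    proof (cases i)
      case 0
      then show ?thesis using ijk head[of j' k'] \<open>j = Suc j'\<close> \<open>k = Suc k'\<close> by simp
    next
      case (Suc i')
      then show ?thesis using ijk tail[of i' j' k'] \<open>j = Suc j'\<close> \<open>k = Suc k'\<close> by simp
    qed
  qed
qed

lemma elimination_ordered_filter: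
  "elimination_ordered A xs \<Longrightarrow> elimination_ordered A (filter P xs)"
  by (induction xs) (auto simp: sorted_wrt_filter)

lemma sorted_wrt_if_distinct_pairs:
  "distinct xs \<Longrightarrow> (\<And>y z. y \<in> set xs \<Longrightarrow> z \<in> set xs \<Longrightarrow> y \<noteq> z \<Longrightarrow> R y z) \<Longrightarrow>
   sorted_wrt R xs"
  by (induction xs) auto

lemma sorted_wrt_distinct_elements:
  "sorted_wrt R xs \<Longrightarrow> y \<in> set xs \<Longrightarrow> z \<in> set xs \<Longrightarrow> y \<noteq> z \<Longrightarrow> R y z \<or> R z y"
  by (induction xs) auto

lemma perfect_elimination_ordering_move_to_front:
  assumes peo: "perfect_elimination_ordering V A \<pi>" and "simplicial V A v" and "v \<in> V"
  shows "perfect_elimination_ordering V A (v # filter (\<lambda>x. x \<noteq> v) \<pi>)"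
proof -
  let ?rest = "filter (\<lambda>x. x \<noteq> v) \<pi>"
  have order: "distinct \<pi>" "set \<pi> = V" and elim: "elimination_ordered A \<pi>"
    using peo by (auto simp: perfect_elimination_ordering_iff linear_order_of_def)
  have "sorted_wrt (\<lambda>y z. min (A v y) (A v z) \<le> A y z) ?rest"
    using order \<open>simplicial V A v\<close>
    by (intro sorted_wrt_if_distinct_pairs) (auto simp: simplicial_def)
  moreover have "elimination_ordered A ?rest"
    using elim by (rule elimination_ordered_filter)
  moreover have "linear_order_of V (v # ?rest)"
    using order \<open>v \<in> V\<close> by (auto simp: linear_order_of_def)
  ultimately show ?thesis
    by (simp add: perfect_elimination_ordering_iff)
qed

lemma simplicial_if_first_of_perfect_elimination_ordering:
  assumes "sym_matrix_on V A" and peo: "perfect_elimination_ordering V A (v # xs)"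
  shows "simplicial V A v"
  unfolding simplicial_def
proof (intro ballI impI)
  fix y z assume y: "y \<in> V - {v}" and z: "z \<in> V - {v}" and "y \<noteq> z"
  have "v \<in> V" and rest: "set xs = V - {v}"
    using peo by (auto simp: perfect_elimination_ordering_iff linear_order_of_def)
  have "sorted_wrt (\<lambda>y z. min (A v y) (A v z) \<le> A y z) xs"
    using peo by (simp add: perfect_elimination_ordering_iff)
  moreover have "y \<in> set xs" "z \<in> set xs"
    using y z rest by auto
  ultimately have "min (A v y) (A v z) \<le> A y z \<or> min (A v z) (A v y) \<le> A z y"
    using \<open>y \<noteq> z\<close> by (blast dest: sorted_wrt_distinct_elements)
  moreover have "A z y = A y z"
    using y z \<open>sym_matrix_on V A\<close> by (auto simp: sym_matrix_on_def)
  ultimately show "min (A v y) (A v z) \<le> A y z"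
    by (metis min.commute)
qed

theorem lemma2:
  fixes V :: "'a set" and A :: "'a \<Rightarrow> 'a \<Rightarrow> real" and v :: 'a
  assumes "finite V"
    and "sym_matrix_on V A"
    and "\<exists>\<pi>. perfect_elimination_ordering V A \<pi>"
    and "v \<in> V"
  shows "simplicial V A v \<longleftrightarrow> (\<exists>\<pi>. perfect_elimination_ordering V A \<pi> \<and> hd \<pi> = v)"
proof
  assume "simplicial V A v"
  moreover obtain \<pi> where "perfect_elimination_ordering V A \<pi>"
    using assms(3) by blast
  ultimately show "\<exists>\<pi>. perfect_elimination_ordering V A \<pi> \<and> hd \<pi> = v"
    using perfect_elimination_ordering_move_to_front \<open>v \<in> V\<close> by fastforce
next
  assume "\<exists>\<pi>. perfect_elimination_ordering V A \<pi> \<and> hd \<pi> = v"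
  then obtain \<pi> where peo: "perfect_elimination_ordering V A \<pi>" and "hd \<pi> = v"
    by blast
  moreover have "\<pi> \<noteq> []"
    using peo \<open>v \<in> V\<close> by (auto simp: perfect_elimination_ordering_iff linear_order_of_def)
  ultimately obtain xs where "perfect_elimination_ordering V A (v # xs)"
    by (cases \<pi>) auto
  then show "simplicial V A v"
    by (rule simplicial_if_first_of_perfect_elimination_ordering[OF \<open>sym_matrix_on V A\<close>])
qed

end
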